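(* Fix an instance $I=\{H,M,\mathbf r\}$ of the offline Notification Timing Problem with $M$ employees and $L=M$ shifts. Let $\mathcal X=\{\mathcal X_i\}_{i\in\mathcal E}$ be any preference profile, and let $B^{\mathcal X}(S)$ denote the total number of (realized) bumps produced by a feasible schedule $S$ under $\mathcal X$. Let $S^*_{\mathcal X}$ be a feasible schedule minimizing $B^{\mathcal X}(S)$, let $S^*_p$ be a feasible schedule minimizing the total number of potential bumps $P(S)$, and let $S^*_I$ be a feasible schedule minimizing $B^{\mathcal I}(S)$, where $\mathcal I$ is the identical-preference profile (all employees have the same strict ranking of shifts). Then $$B^{\mathcal X}(S^*_{\mathcal X})\;\le\; P(S^*_p)\;=\;B^{\mathcal I}(S^*_I).$$
   Context: Employees $\mathcal E=\{1,\dots,M\}$ are ordered by seniority ($i<j$ means $i$ is more senior). Each employee $i$ has a response delay $r_i\in\mathbb Z_{\ge0}$; the horizon is $H\in\mathbb Z_{>0}$. A schedule is $S=(s_i,e_i)_{i\in\mathcal E}$ with notification times $s_i\ge 0$ and response times $e_i=s_i+r_i$; it is feasible if $s_1\le s_2\le\dots\le s_M$ and $e_i\le H$ for all $i$. There are $L=M$ shifts $\mathcal L$, and each employee $i$ has a strict preference order $\mathcal X_i$ over all shifts. Assignment dynamics: responses are processed in increasing order of response time; employees responding at the same time are processed in order of seniority. When an employee $i$ responds (or is bumped), $i$ claims its most preferred shift among those not currently held by an employee more senior than $i$. If that shift is unoccupied, $i$ takes it; if it is held by a junior employee $j>i$, then $i$ takes it, $j$ is bumped (this counts as one bump), and $j$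 immediately repeats the same rule; this may create a chain of bumps. If no shift is available, the employee gets no shift. The total number of bumps $B^{\mathcal X}(S)$ is the total number of such bump events over the whole process. Potential bumps: for a schedule $S$, $p_i=|\{j\in\mathcal E: i<j,\ e_i>e_j\}|$ and $P(S)=\sum_{i\in\mathcal E}p_i$ (the number of pairs in which a senior employee responds strictly later than a junior one). *)

theory Defs
  imports Main
begin

text \<open>Employees are 0,...,M-1 (smaller index = more senior);
shifts are 0,...,M-1 (L = M).  A preference profile assigns to each employee i
a list X i enumerating all shifts, most preferred first.  A schedule is given by
the notification times s :: nat => nat; response times are s i + r i.
An assignment maps each shift to its holder (if any).\<close>

type_synonym assignment = "nat \<Rightarrow> nat option"

definition valid_ranking :: "nat \<Rightarrow> nat list \<Rightarrow> bool" where
  "valid_ranking M xs \<longleftrightarrow> distinct xs \<and> set xs = {0..<M}"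

definition valid_profile :: "nat \<Rightarrow> (nat \<Rightarrow> nat list) \<Rightarrow> bool" where
  "valid_profile M X \<longleftrightarrow> (\<forall>i<M. valid_ranking M (X i))"

definition feasible :: "nat \<Rightarrow> nat \<Rightarrow> (nat \<Rightarrow> nat) \<Rightarrow> (nat \<Rightarrow> nat) \<Rightarrow> bool" where
  "feasible M H r s \<longleftrightarrow>
     (\<forall>i j. i \<le> j \<longrightarrow> j < M \<longrightarrow> s i \<le> s j) \<and> (\<forall>i<M. s i + r i \<le> H)"

text \<open>Employee i claims its most preferred shift not held by a more senior
employee; if that shift is held by a junior j, j is bumped (one bump) and
repeats the rule.  The chain consists of strictly increasing employee indices,
hence has length at most M; the fuel argument (set to M below) is never
exhausted.\<close>

fun claim :: "nat \<Rightarrow> (nat \<Rightarrow> nat list) \<Rightarrow> assignment \<Rightarrow> nat \<Rightarrow> assignment \<times> nat" where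
  "claim 0 X A i = (A, 0)"
| "claim (Suc f) X A i =
     (case find (\<lambda>l. case A l of None \<Rightarrow> True | Some k \<Rightarrow> \<not> k < i) (X i) of
        None \<Rightarrow> (A, 0)
      | Some l \<Rightarrow>
          (case A l of
             None \<Rightarrow> (A(l := Some i), 0)
           | Some j \<Rightarrow> (let (A', b) = claim f X (A(l := Some i)) j in (A', Suc b))))"

text \<open>Responses are processed in increasing order of response time, ties broken
by seniority (sort_key is a stable sort and [0..<M] lists employees by
seniority, so ties in response time keep seniority order).\<close>

definition response_order :: "nat \<Rightarrow> (nat \<Rightarrow> nat) \<Rightarrow> (nat \<Rightarrow> nat) \<Rightarrow> nat list" where
  "response_order M r s = sort_key (\<lambda>i. s i + r i) [0..<M]"

definition total_bumps :: "nat \<Rightarrow> (nat \<Rightarrow> nat) \<Rightarrow> (nat \<Rightarrow> nat list) \<Rightarrow> (nat \<Rightarrow> nat) \<Rightarrow> nat" where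
  "total_bumps M r X s =
     snd (foldl (\<lambda>(A, b) i. (let (A', b') = claim M X A i in (A', b + b')))
                (\<lambda>_. None, 0) (response_order M r s))"

definition potential_bumps :: "nat \<Rightarrow> (nat \<Rightarrow> nat) \<Rightarrow> (nat \<Rightarrow> nat) \<Rightarrow> nat" where
  "potential_bumps M r s =
     card {(i, j). i < j \<and> j < M \<and> s j + r j < s i + r i}"

end

theory Submission
  imports Defs "HOL-Library.Product_Lexorder"
begin

text \<open>Each bump in the chain started by a response of employee c hands a shift to a strictly
more junior employee, and every bumped employee already holds a shift, i.e. has responded
earlier; so c's response causes at most as many bumps as there are juniors who responded
before c. Summing over the response order gives B(S) \<le> P(S) for every schedule and every
preference profile. Under an identical ranking the holders always occupy the top-ranked shifts in
seniority order, and a response by c bumps every junior holder exactly once, so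
B(S) = P(S) for every schedule; the two minimisation problems therefore coincide.\<close>

lemma claim_bumps_le_junior_holders:
  assumes "claim f X A c = (A', b)" "ran A \<subseteq> P" "inj_on A (dom A)" "finite P" "c \<notin> P"
  shows "ran A' \<subseteq> insert c P \<and> inj_on A' (dom A') \<and> b \<le> card {j \<in> P. c < j}"
  using assms
proof (induction f arbitrary: A P c A' b)
  case 0
  then show ?case by (auto intro: subset_insertI2)
next
  case (Suc f)
  show ?case
  proof (cases "find (\<lambda>l. case A l of None \<Rightarrow> True | Some k \<Rightarrow> \<not> k < c) (X c)")
    case None
    with Suc.prems show ?thesis by (auto intro: subset_insertI2)
  next
    case (Some l)
    then have l_free: "case A l of None \<Rightarrow> True | Some k \<Rightarrow> \<not> k < c"
      by (auto simp: find_Some_iff)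
    have c_not_held: "c \<notin> ran A" using Suc.prems(2,5) by blast
    have ran_upd: "ran (A(l \<mapsto> c)) \<subseteq> insert c (ran A - set_option (A l))"
      using Suc.prems(3) by (auto simp: ran_def inj_on_def dom_def)
    have inj_upd: "inj_on (A(l \<mapsto> c)) (dom (A(l \<mapsto> c)))"
      using Suc.prems(3) c_not_held by (auto simp: inj_on_def ran_def dom_def)
    show ?thesis
    proof (cases "A l")
      case None
      then show ?thesis using Suc.prems(1,2) Some ran_upd inj_upd by auto
    next
      case (Some j)
      have "j \<in> P" using Some Suc.prems(2) by (auto simp: ran_def)
      moreover have "c < j" using l_free Some \<open>j \<in> P\<close> Suc.prems(5) by (cases "c = j") auto
      moreover obtain A'' b'' where chain: "claim f X (A(l \<mapsto> c)) j = (A'', b'')"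
        by fastforce
      ultimately have "A' = A''" "b = Suc b''"
        using Suc.prems(1) \<open>find _ (X c) = Some l\<close> Some by auto
      have ran_sub: "ran (A(l \<mapsto> c)) \<subseteq> insert c (P - {j})"
        using ran_upd Some Suc.prems(2) by auto
      have IH: "ran A'' \<subseteq> insert j (insert c (P - {j})) \<and> inj_on A'' (dom A'')
          \<and> b'' \<le> card {k \<in> insert c (P - {j}). j < k}"
        using Suc.IH[OF chain ran_sub inj_upd] Suc.prems(4) \<open>c < j\<close> by simp
      have "{k \<in> P. j < k} \<subset> {k \<in> P. c < k}" using \<open>c < j\<close> \<open>j \<in> P\<close> by auto
      then have "card {k \<in> P. j < k} < card {k \<in> P. c < k}"
        using Suc.prems(4) by (intro psubset_card_mono) auto
      moreover have "{k \<in> insert c (P - {j}). j < k} = {k \<in> P. j < k}" using \<open>c < j\<close> by auto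
      moreover have "insert j (insert c (P - {j})) = insert c P" using \<open>j \<in> P\<close> by auto
      ultimately show ?thesis using IH \<open>A' = A''\<close> \<open>b = Suc b''\<close> by auto
    qed
  qed
qed

fun served_juniors :: "nat set \<Rightarrow> nat list \<Rightarrow> nat" where
  "served_juniors P [] = 0"
| "served_juniors P (x # xs) = card {j \<in> P. x < j} + served_juniors (insert x P) xs"

definition respond :: "nat \<Rightarrow> (nat \<Rightarrow> nat list) \<Rightarrow> assignment \<times> nat \<Rightarrow> nat \<Rightarrow> assignment \<times> nat" where
  "respond M X = (\<lambda>(A, b) i. let (A', b') = claim M X A i in (A', b + b'))"

lemma total_bumps_eq_foldl_respond:
  "total_bumps M r X s = snd (foldl (respond M X) (Map.empty, 0) (response_order M r s))"
  by (simp add: total_bumps_def respond_def)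

lemma foldl_respond_le_served_juniors:
  assumes "ran A \<subseteq> P" "inj_on A (dom A)" "finite P" "set xs \<inter> P = {}" "distinct xs"
  shows "snd (foldl (respond M X) (A, b) xs) \<le> b + served_juniors P xs"
  using assms
proof (induction xs arbitrary: A P b)
  case Nil
  then show ?case by simp
next
  case (Cons x xs)
  obtain A' b' where step: "claim M X A x = (A', b')" by fastforce
  with Cons.prems claim_bumps_le_junior_holders[OF step]
  have "ran A' \<subseteq> insert x P" "inj_on A' (dom A')" "b' \<le> card {j \<in> P. x < j}"
    by auto
  moreover have "respond M X (A, b) x = (A', b + b')" using step by (simp add: respond_def)
  ultimately show ?case
    using Cons.IH[of A' "insert x P" "b + b'"] Cons.prems by auto
qed

lemma served_juniors_eq_card_inversions:
  fixes e :: "nat \<Rightarrow> nat"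
  assumes "sorted_wrt (\<lambda>a b. (e a, a) < (e b, b)) xs" "finite P"
    "\<forall>p \<in> P. \<forall>x \<in> set xs. (e p, p) < (e x, x)"
  shows "served_juniors P xs = card {(i, j). i \<in> set xs \<and> j \<in> P \<union> set xs \<and> i < j \<and> e j < e i}"
  using assms
proof (induction xs arbitrary: P)
  case Nil
  then show ?case by simp
next
  case (Cons x xs)
  let ?first = "Pair x ` {j \<in> P. x < j}"
  let ?rest = "{(i, j). i \<in> set xs \<and> j \<in> insert x P \<union> set xs \<and> i < j \<and> e j < e i}"
  have "{(i, j). i \<in> set (x # xs) \<and> j \<in> P \<union> set (x # xs) \<and> i < j \<and> e j < e i}
      = ?first \<union> ?rest"
    using Cons.prems(1,3) by fastforce
  moreover have "?first \<inter> ?rest = {}" using Cons.prems(1) by auto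
  moreover have "finite ?rest"
    using Cons.prems(2) by (auto intro: rev_finite_subset[of "set xs \<times> (insert x P \<union> set xs)"])
  moreover have "card ?first = card {j \<in> P. x < j}" by (simp add: card_image inj_on_def)
  moreover have "served_juniors (insert x P) xs = card ?rest"
    using Cons.IH[of "insert x P"] Cons.prems by auto
  ultimately show ?case using Cons.prems(2) by (simp add: card_Un_disjoint)
qed

lemma sorted_wrt_lex_insort_key:
  fixes e :: "'a::linorder \<Rightarrow> 'b::linorder"
  assumes "sorted_wrt (\<lambda>a b. (e a, a) < (e b, b)) ys" "\<forall>y \<in> set ys. x < y"
  shows "sorted_wrt (\<lambda>a b. (e a, a) < (e b, b)) (insort_key e x ys)"
  using assms by (induction ys) (auto simp: set_insort_key less_le_not_le)

lemma sorted_wrt_lex_sort_key: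
  fixes e :: "'a::linorder \<Rightarrow> 'b::linorder"
  shows "sorted_wrt (<) xs \<Longrightarrow> sorted_wrt (\<lambda>a b. (e a, a) < (e b, b)) (sort_key e xs)"
  by (induction xs) (simp_all del: less_prod_simp add: sorted_wrt_lex_insort_key)

lemma served_juniors_response_order:
  "served_juniors {} (response_order M r s) = potential_bumps M r s"
proof -
  let ?e = "\<lambda>i. s i + r i"
  have "sorted_wrt (\<lambda>a b. (?e a, a) < (?e b, b)) (response_order M r s)"
    unfolding response_order_def by (rule sorted_wrt_lex_sort_key) simp
  then have "served_juniors {} (response_order M r s)
      = card {(i, j). i \<in> set (response_order M r s) \<and> j \<in> set (response_order M r s)
              \<and> i < j \<and> ?e j < ?e i}"
    by (simp add: served_juniors_eq_card_inversions)
  also have "\<dots> = potential_bumps M r s"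
    unfolding potential_bumps_def response_order_def by (rule arg_cong[where f = card]) auto
  finally show ?thesis .
qed

lemma total_bumps_le_potential_bumps: "total_bumps M r X s \<le> potential_bumps M r s"
proof -
  have "total_bumps M r X s \<le> 0 + served_juniors {} (response_order M r s)"
    unfolding total_bumps_eq_foldl_respond
    by (rule foldl_respond_le_served_juniors) (auto simp: response_order_def)
  then show ?thesis by (simp add: served_juniors_response_order)
qed

lemma map_of_zip_nth_prefix:
  "distinct \<sigma> \<Longrightarrow> k < length \<sigma> \<Longrightarrow>
   map_of (zip \<sigma> ps) (\<sigma> ! k) = (if k < length ps then Some (ps ! k) else None)"
proof (induction \<sigma> arbitrary: ps k)
  case Nil
  then show ?case by simp
next
  case (Cons a \<sigma>)
  then show ?case
    by (cases ps; cases k) (auto simp: map_of_eq_None_iff dest: set_zip_leftD)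
qed

lemma map_of_zip_upd_nth:
  "distinct \<sigma> \<Longrightarrow> length lo < length \<sigma> \<Longrightarrow>
   (map_of (zip \<sigma> (lo @ hi)))(\<sigma> ! length lo \<mapsto> c) = map_of (zip \<sigma> (lo @ c # drop 1 hi))"
proof (induction lo arbitrary: \<sigma>)
  case Nil
  then show ?case by (cases \<sigma>; cases hi) auto
next
  case (Cons x lo)
  then obtain a \<sigma>' where \<sigma>: "\<sigma> = a # \<sigma>'" by (cases \<sigma>) auto
  with Cons.prems have "\<sigma>' ! length lo \<noteq> a" by auto
  then have "(map_of (zip \<sigma> (x # lo @ hi)))(\<sigma> ! length (x # lo) \<mapsto> c)
      = ((map_of (zip \<sigma>' (lo @ hi)))(\<sigma>' ! length lo \<mapsto> c))(a \<mapsto> x)"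
    by (simp add: \<sigma> fun_upd_twist)
  also have "\<dots> = (map_of (zip \<sigma>' (lo @ c # drop 1 hi)))(a \<mapsto> x)"
    using Cons.IH[of \<sigma>'] Cons.prems \<sigma> by (simp only: distinct.simps length_Cons)
  also have "\<dots> = map_of (zip \<sigma> (x # lo @ c # drop 1 hi))"
    by (simp add: \<sigma>)
  finally show ?case by (simp only: append_Cons)
qed

lemma find_first_free_slot:
  fixes c :: nat
  assumes "distinct \<sigma>" "\<forall>y \<in> set lo. y < c" "\<forall>y \<in> set hi. c < y"
    "length lo + length hi < length \<sigma>"
  shows "find (\<lambda>l. case map_of (zip \<sigma> (lo @ hi)) l of None \<Rightarrow> True | Some k \<Rightarrow> \<not> k < c) \<sigma>
         = Some (\<sigma> ! length lo)"
  unfolding find_Some_iff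
proof (intro exI conjI allI impI)
  show "length lo < length \<sigma>" using assms(4) by simp
  show "case map_of (zip \<sigma> (lo @ hi)) (\<sigma> ! length lo) of None \<Rightarrow> True | Some k \<Rightarrow> \<not> k < c"
    using assms map_of_zip_nth_prefix[OF assms(1), of "length lo" "lo @ hi"]
    by (cases hi) (auto simp: nth_append)
  fix k assume "k < length lo"
  with assms map_of_zip_nth_prefix[OF assms(1), of k "lo @ hi"]
  show "\<not> (case map_of (zip \<sigma> (lo @ hi)) (\<sigma> ! k) of None \<Rightarrow> True | Some k' \<Rightarrow> \<not> k' < c)"
    by (auto simp: nth_append)
qed simp

text \<open>\<open>map_of (zip \<sigma> ps)\<close> is the assignment in which the holders \<open>ps\<close>, listed by seniority,
occupy the top-ranked shifts of \<open>\<sigma>\<close> in order. A response by \<open>c\<close> takes the slot of the most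
senior junior holder and pushes every junior holder one slot down.\<close>

lemma claim_identical_prefs:
  assumes "distinct \<sigma>" "sorted_wrt (<) (lo @ hi)" "\<forall>y \<in> set lo. y < c" "\<forall>y \<in> set hi. c < y"
    "length lo + length hi < length \<sigma>" "length hi < f"
  shows "claim f (\<lambda>_. \<sigma>) (map_of (zip \<sigma> (lo @ hi))) c = (map_of (zip \<sigma> (lo @ c # hi)), length hi)"
  using assms
proof (induction hi arbitrary: lo c f)
  case Nil
  then obtain f' where "f = Suc f'" by (cases f) auto
  with Nil find_first_free_slot[of \<sigma> lo c "[]"] map_of_zip_nth_prefix[of \<sigma> "length lo" lo]
    map_of_zip_upd_nth[of \<sigma> lo "[]" c]
  show ?case by simp
next
  case (Cons j hi)
  then obtain f' where f: "f = Suc f'" by (cases f) auto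
  have "claim f' (\<lambda>_. \<sigma>) (map_of (zip \<sigma> ((lo @ [c]) @ hi))) j
      = (map_of (zip \<sigma> ((lo @ [c]) @ j # hi)), length hi)"
    using Cons.prems f by (intro Cons.IH) (auto simp: sorted_wrt_append)
  with Cons.prems f find_first_free_slot[of \<sigma> lo c "j # hi"]
    map_of_zip_nth_prefix[of \<sigma> "length lo" "lo @ j # hi"] map_of_zip_upd_nth[of \<sigma> lo "j # hi" c]
  show ?case by simp
qed

lemma insort_eq_filter_less_Cons_filter_greater:
  fixes c :: "'a::linorder"
  shows "sorted_wrt (<) xs \<Longrightarrow> c \<notin> set xs \<Longrightarrow>
    insort c xs = filter (\<lambda>y. y < c) xs @ c # filter (\<lambda>y. c < y) xs"
proof (induction xs)
  case (Cons x xs)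
  show ?case
  proof (cases "x < c")
    case False
    with Cons.prems have "\<forall>y \<in> set (x # xs). c < y" by auto
    then have "filter (\<lambda>y. y < c) (x # xs) = []" "filter (\<lambda>y. c < y) (x # xs) = x # xs"
        "insort c (x # xs) = c # x # xs"
      by (auto simp: filter_empty_conv filter_id_conv intro!: insort_is_Cons less_imp_le
          simp del: insort_key.simps filter.simps)
    then show ?thesis by simp
  qed (use Cons in auto)
qed simp

lemma claim_identical_prefs_insort:
  assumes "distinct \<sigma>" "sorted_wrt (<) ps" "c \<notin> set ps" "length ps < length \<sigma>" "length ps < f"
  shows "claim f (\<lambda>_. \<sigma>) (map_of (zip \<sigma> ps)) c
         = (map_of (zip \<sigma> (insort c ps)), card {j \<in> set ps. c < j})"
proof -
  define lo where "lo = filter (\<lambda>y. y < c) ps"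
  define hi where "hi = filter (\<lambda>y. c < y) ps"
  have ins: "insort c ps = lo @ c # hi"
    unfolding lo_def hi_def using assms(2,3) by (rule insort_eq_filter_less_Cons_filter_greater)
  have "c \<notin> set lo" by (simp add: lo_def)
  have "ps = remove1 c (insort c ps)" by simp
  also have "\<dots> = lo @ hi" using ins \<open>c \<notin> set lo\<close> by (simp add: remove1_append)
  finally have "ps = lo @ hi" .
  have card_hi: "card {j \<in> set ps. c < j} = length hi"
    unfolding hi_def using assms(2) by (simp add: strict_sorted_iff distinct_card[symmetric])
  have "claim f (\<lambda>_. \<sigma>) (map_of (zip \<sigma> (lo @ hi))) c = (map_of (zip \<sigma> (lo @ c # hi)), length hi)"
  proof (rule claim_identical_prefs)
    show "sorted_wrt (<) (lo @ hi)" "length lo + length hi < length \<sigma>"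
      using assms(2,4) \<open>ps = lo @ hi\<close> by simp_all
    show "length hi < f" using assms(5) \<open>ps = lo @ hi\<close> by simp
  qed (simp_all add: assms(1) lo_def hi_def)
  then show ?thesis unfolding ins card_hi using \<open>ps = lo @ hi\<close> by simp
qed

lemma foldl_respond_identical_prefs:
  assumes "distinct \<sigma>" "length \<sigma> = M" "sorted_wrt (<) ps" "set ps \<union> set xs \<subseteq> {0..<M}"
    "set xs \<inter> set ps = {}" "distinct xs"
  shows "snd (foldl (respond M (\<lambda>_. \<sigma>)) (map_of (zip \<sigma> ps), b) xs)
         = b + served_juniors (set ps) xs"
  using assms
proof (induction xs arbitrary: ps b)
  case Nil
  then show ?case by simp
next
  case (Cons x xs)
  have "set ps \<subset> {0..<M}" using Cons.prems(4,5) by auto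
  then have "card (set ps) < M" using psubset_card_mono[of "{0..<M}"] by simp
  then have "length ps < M" using Cons.prems(3) by (simp add: strict_sorted_iff distinct_card)
  then have step: "respond M (\<lambda>_. \<sigma>) (map_of (zip \<sigma> ps), b) x
      = (map_of (zip \<sigma> (insort x ps)), b + card {j \<in> set ps. x < j})"
    using Cons.prems by (simp add: respond_def claim_identical_prefs_insort)
  have "sorted_wrt (<) (insort x ps)"
    using Cons.prems(3,5) by (simp add: strict_sorted_iff sorted_insort distinct_insort)
  then have "snd (foldl (respond M (\<lambda>_. \<sigma>))
        (map_of (zip \<sigma> (insort x ps)), b + card {j \<in> set ps. x < j}) xs)
      = b + card {j \<in> set ps. x < j} + served_juniors (set (insort x ps)) xs"
    using Cons.prems by (intro Cons.IH) (auto simp: set_insort_key)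
  with step show ?case by (simp add: set_insort_key)
qed

lemma total_bumps_identical_prefs:
  assumes "valid_ranking M \<sigma>"
  shows "total_bumps M r (\<lambda>_. \<sigma>) s = potential_bumps M r s"
proof -
  have "distinct \<sigma>" "length \<sigma> = M"
    using assms by (auto simp: valid_ranking_def dest: distinct_card)
  then have "snd (foldl (respond M (\<lambda>_. \<sigma>)) (map_of (zip \<sigma> []), 0) (response_order M r s))
      = 0 + served_juniors (set []) (response_order M r s)"
    by (intro foldl_respond_identical_prefs) (auto simp: response_order_def)
  then show ?thesis by (simp add: total_bumps_eq_foldl_respond served_juniors_response_order)
qed

theorem theorem1:
  fixes M H :: nat and r :: "nat \<Rightarrow> nat" and X :: "nat \<Rightarrow> nat list" and \<sigma> :: "nat list"
    and sX sp sI :: "nat \<Rightarrow> nat"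
  assumes H: "0 < H"
    and X: "valid_profile M X"
    and \<sigma>: "valid_ranking M \<sigma>"
    and sX_feas: "feasible M H r sX"
    and sX_opt: "\<forall>s. feasible M H r s \<longrightarrow> total_bumps M r X sX \<le> total_bumps M r X s"
    and sp_feas: "feasible M H r sp"
    and sp_opt: "\<forall>s. feasible M H r s \<longrightarrow> potential_bumps M r sp \<le> potential_bumps M r s"
    and sI_feas: "feasible M H r sI"
    and sI_opt: "\<forall>s. feasible M H r s \<longrightarrow>
                   total_bumps M r (\<lambda>_. \<sigma>) sI \<le> total_bumps M r (\<lambda>_. \<sigma>) s"
  shows "total_bumps M r X sX \<le> potential_bumps M r sp
       \<and> potential_bumps M r sp = total_bumps M r (\<lambda>_. \<sigma>) sI"
proof
  show "total_bumps M r X sX \<le> potential_bumps M r sp"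
    using sX_opt sp_feas total_bumps_le_potential_bumps[of M r X sp] by (meson le_trans)
  have "potential_bumps M r sp \<le> potential_bumps M r sI" using sp_opt sI_feas by blast
  moreover have "total_bumps M r (\<lambda>_. \<sigma>) sI \<le> total_bumps M r (\<lambda>_. \<sigma>) sp"
    using sI_opt sp_feas by blast
  ultimately show "potential_bumps M r sp = total_bumps M r (\<lambda>_. \<sigma>) sI"
    using total_bumps_identical_prefs[OF \<sigma>] by (metis antisym)
qed

end
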